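(* Let $(X,d)$ be a complete metric space and let $u:X\to\mathbb{R}\cup\{+\infty\}$ be a proper, lower semicontinuous function that is bounded from below. Then there is a sequence $\{z_n\}_{n\in\mathbb{N}}\subset X$ such that \[\lim_{n\to\infty}G[u](z_n)=0\quad\text{and}\quad \sum_{n=0}^{\infty}G[u](z_n)\,d(z_n,z_{n+1})<+\infty.\]
   Context: For a function $u:X\to\mathbb{R}\cup\{+\infty\}$ on a metric space $(X,d)$, the global slope is $G[u](x)=\sup_{y\neq x}\frac{(u(x)-u(y))_+}{d(x,y)}$ if $u(x)<+\infty$ and $G[u](x)=+\infty$ otherwise, where $\alpha_+=\max\{\alpha,0\}$. A function is proper if it is not identically $+\infty$. *)

theory Defs
  imports "HOL-Analysis.Analysis"
begin

definition lower_semicontinuous :: "('a::topological_space \<Rightarrow> ereal) \<Rightarrow> bool" where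
  "lower_semicontinuous u \<longleftrightarrow> (\<forall>x. \<forall>t. t < u x \<longrightarrow> (\<forall>\<^sub>F y in at x. t < u y))"

text \<open>The value 0 is inserted so that the sup over a one-point space is 0
  (all quotients are nonnegative, so this changes nothing otherwise).\<close>
definition global_slope :: "('a::metric_space \<Rightarrow> ereal) \<Rightarrow> 'a \<Rightarrow> ereal" where
  "global_slope u x =
     (if u x = \<infinity> then \<infinity>
      else Sup (insert 0 {max 0 (u x - u y) / ereal (dist x y) | y. y \<noteq> x}))"

end

theory Submission
  imports Defs
begin

text \<open>Apply Ekeland's variational principle repeatedly: z(n+1) is an Ekeland point of z(n) for
  the constant 2^-(n+1). Then u(z n) \<le> u w + 2^-n d(z n, w) for all w, so G[u](z n) \<le> 2^-n,
  while u(z (n+1)) + 2^-(n+1) d(z n, z (n+1)) \<le> u(z n). Hence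
  G[u](z n) d(z n, z (n+1)) \<le> 2 (u(z n) - u(z (n+1))), and these terms telescope to at most
  2 (u(z 0) - inf u). Ekeland's principle itself follows from Cantor's intersection theorem,
  applied to the nested closed sets S(x) = {y \<in> D. f y + l d(x, y) \<le> f x} (ekeland_set f D l x)
  along a sequence of approximate minimisers.\<close>

definition ekeland_set ::
    "('a::metric_space \<Rightarrow> real) \<Rightarrow> 'a set \<Rightarrow> real \<Rightarrow> 'a \<Rightarrow> 'a set" where
  "ekeland_set f D l x = {y \<in> D. f y + l * dist x y \<le> f x}"

lemma ekeland_set_refl: "x \<in> D \<Longrightarrow> x \<in> ekeland_set f D l x"
  by (simp add: ekeland_set_def)

lemma ekeland_set_subset:
  assumes "0 \<le> l" and "y \<in> ekeland_set f D l x"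
  shows "ekeland_set f D l y \<subseteq> ekeland_set f D l x"
proof
  fix z assume "z \<in> ekeland_set f D l y"
  moreover have "l * dist x z \<le> l * dist x y + l * dist y z"
    using mult_left_mono[OF dist_triangle assms(1)] by (simp add: distrib_left)
  ultimately show "z \<in> ekeland_set f D l x"
    using assms(2) by (auto simp: ekeland_set_def)
qed

text \<open>The point y is an approximate minimiser of f on S(x).\<close>
lemma ekeland_set_small:
  assumes "0 < l" "0 < e" "x \<in> D" and bdd: "bdd_below (f ` D)"
  obtains y where "y \<in> ekeland_set f D l x"
    "\<And>z. z \<in> ekeland_set f D l y \<Longrightarrow> dist y z < e"
proof -
  let ?S = "ekeland_set f D l x"
  have bdd_S: "bdd_below (f ` ?S)"
    using bdd by (rule bdd_below_mono) (auto simp: ekeland_set_def)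
  have "f ` ?S \<noteq> {}"
    using ekeland_set_refl[OF \<open>x \<in> D\<close>] by blast
  from cInf_lessD[OF this, of "Inf (f ` ?S) + l * e"]
  obtain y where y: "y \<in> ?S" "f y < Inf (f ` ?S) + l * e"
    using assms by auto
  have inf_le: "Inf (f ` ?S) \<le> f z" if "z \<in> ?S" for z
    using bdd_S that by (simp add: cInf_lower)
  have "dist y z < e" if "z \<in> ekeland_set f D l y" for z
  proof -
    have "z \<in> ?S"
      using ekeland_set_subset[OF _ y(1)] that assms(1) by auto
    moreover have "f z + l * dist y z \<le> f y"
      using that by (simp add: ekeland_set_def)
    ultimately have "l * dist y z < l * e"
      using inf_le[of z] y(2) by linarith
    then show ?thesis
      using \<open>0 < l\<close> by simp
  qed
  with y(1) show ?thesis
    using that by blast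
qed

lemma ekeland_sets_shrinking_nest:
  fixes f :: "'a::metric_space \<Rightarrow> real"
  assumes bdd: "bdd_below (f ` D)" and "x0 \<in> D" and "0 < l"
  obtains xs :: "nat \<Rightarrow> 'a" where "\<And>n. xs n \<in> ekeland_set f D l x0"
    "\<And>m n. m \<le> n \<Longrightarrow> ekeland_set f D l (xs n) \<subseteq> ekeland_set f D l (xs m)"
    "\<And>e. 0 < e \<Longrightarrow>
      \<exists>n. \<forall>y \<in> ekeland_set f D l (xs n). \<forall>z \<in> ekeland_set f D l (xs n). dist y z < e"
proof -
  let ?S = "ekeland_set f D l"
  have S_mono: "?S y \<subseteq> ?S x" if "y \<in> ?S x" for x y
    using ekeland_set_subset[OF _ that] \<open>0 < l\<close> by simp
  have start: "\<exists>x. x \<in> ?S x0"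
    using ekeland_set_refl[OF \<open>x0 \<in> D\<close>] by blast
  have "\<exists>y. y \<in> ?S x0 \<and> y \<in> ?S x \<and> (\<forall>z \<in> ?S y. dist y z < inverse (Suc n))"
    if "x \<in> ?S x0" for x n
  proof -
    have "0 < inverse (real (Suc n))" "x \<in> D"
      using that by (auto simp: ekeland_set_def)
    then obtain y where "y \<in> ?S x" "\<And>z. z \<in> ?S y \<Longrightarrow> dist y z < inverse (Suc n)"
      using ekeland_set_small[OF \<open>0 < l\<close> _ _ bdd] by metis
    then show ?thesis
      using S_mono[OF that] by blast
  qed
  from dependent_nat_choice[of "\<lambda>_ x. x \<in> ?S x0"
      "\<lambda>n x y. y \<in> ?S x \<and> (\<forall>z \<in> ?S y. dist y z < inverse (Suc n))",
      OF start this]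
  obtain xs where xs: "\<And>n. xs n \<in> ?S x0" "\<And>n. xs (Suc n) \<in> ?S (xs n)"
    and small: "\<And>n z. z \<in> ?S (xs (Suc n)) \<Longrightarrow> dist (xs (Suc n)) z < inverse (Suc n)"
    by blast
  have nested: "?S (xs n) \<subseteq> ?S (xs m)" if "m \<le> n" for m n
    using that
  proof (induction rule: dec_induct)
    case (step n)
    with S_mono[OF xs(2)[of n]] show ?case
      by blast
  qed simp
  have diam: "\<exists>n. \<forall>y \<in> ?S (xs n). \<forall>z \<in> ?S (xs n). dist y z < e" if "0 < e" for e
  proof -
    obtain n where n: "inverse (Suc n) < e / 2"
      using reals_Archimedean \<open>0 < e\<close> half_gt_zero by blast
    have "dist y z < e" if "y \<in> ?S (xs (Suc n))" "z \<in> ?S (xs (Suc n))" for y z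
      using small[OF that(1)] small[OF that(2)] n dist_triangle3[of y z "xs (Suc n)"] by linarith
    then show ?thesis
      by blast
  qed
  show thesis
    using xs(1) nested diam by (rule that)
qed

lemma ekeland_variational_principle_real:
  fixes f :: "'a::complete_space \<Rightarrow> real"
  assumes closed_S: "\<And>x. x \<in> D \<Longrightarrow> closed (ekeland_set f D l x)"
    and bdd: "bdd_below (f ` D)" and "x0 \<in> D" and "0 < l"
  obtains v where "v \<in> D" "f v + l * dist x0 v \<le> f x0"
    "\<And>w. w \<in> D \<Longrightarrow> w \<noteq> v \<Longrightarrow> f v < f w + l * dist v w"
proof -
  let ?S = "ekeland_set f D l"
  have S_D: "?S x \<subseteq> D" for x
    by (auto simp: ekeland_set_def)
  have S_mono: "?S y \<subseteq> ?S x" if "y \<in> ?S x" for x y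
    using ekeland_set_subset[OF _ that] \<open>0 < l\<close> by simp
  obtain xs :: "nat \<Rightarrow> 'a" where xs: "\<And>n. xs n \<in> ?S x0"
    and nested: "\<And>m n. m \<le> n \<Longrightarrow> ?S (xs n) \<subseteq> ?S (xs m)"
    and diam: "\<And>e. 0 < e \<Longrightarrow> \<exists>n. \<forall>y \<in> ?S (xs n). \<forall>z \<in> ?S (xs n). dist y z < e"
    using ekeland_sets_shrinking_nest[OF bdd \<open>x0 \<in> D\<close> \<open>0 < l\<close>] by blast
  have "closed (?S (xs n))" for n
    using closed_S S_D xs by blast
  moreover have "?S (xs n) \<noteq> {}" for n
    using ekeland_set_refl[of "xs n" D f l] S_D xs by auto
  ultimately have "\<exists>v. \<Inter> (range (\<lambda>n. ?S (xs n))) = {v}"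
    using decreasing_closed_nest_sing[of "\<lambda>n. ?S (xs n)"] nested diam by blast
  then obtain v where v: "\<Inter> (range (\<lambda>n. ?S (xs n))) = {v}"
    by blast
  then have v_S: "v \<in> ?S (xs n)" for n
    by blast
  have "f v < f w + l * dist v w" if "w \<in> D" "w \<noteq> v" for w
  proof (rule ccontr)
    assume "\<not> ?thesis"
    then have "w \<in> ?S v"
      using \<open>w \<in> D\<close> by (simp add: ekeland_set_def)
    then have "w \<in> \<Inter> (range (\<lambda>n. ?S (xs n)))"
      using S_mono[OF v_S] by blast
    with v \<open>w \<noteq> v\<close> show False
      by blast
  qed
  moreover have "v \<in> ?S x0"
    using S_mono[OF xs] v_S by blast
  ultimately show thesis
    using that by (auto simp: ekeland_set_def)
qed

lemma closed_sublevel_lower_semicontinuous: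
  assumes "lower_semicontinuous u"
  shows "closed {x. u x \<le> c}"
proof -
  have "\<forall>\<^sub>F z in at x. z \<notin> {x. u x \<le> c}" if "x \<notin> {x. u x \<le> c}" for x
    using assms that unfolding lower_semicontinuous_def by (simp add: not_le)
  then show ?thesis
    unfolding closed_limpt islimpt_iff_eventually by blast
qed

lemma lower_semicontinuous_add_continuous:
  fixes u :: "'a::metric_space \<Rightarrow> ereal"
  assumes lsc: "lower_semicontinuous u" and cont: "continuous_on UNIV g"
  shows "lower_semicontinuous (\<lambda>x. u x + ereal (g x))"
  unfolding lower_semicontinuous_def
proof (intro allI impI)
  fix x and t :: ereal
  assume "t < u x + ereal (g x)"
  then have "t - ereal (g x) < u x"
    by (simp add: ereal_minus_less)
  then obtain s where s: "t - ereal (g x) < ereal s" "ereal s < u x"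
    using ereal_dense2 by blast
  then have "t < ereal (s + g x)"
    by (simp add: ereal_minus_less)
  from ereal_dense2[OF this] obtain r where r: "t < ereal r" "r < s + g x"
    by auto
  have "\<forall>\<^sub>F z in at x. ereal s < u z"
    using lsc s(2) unfolding lower_semicontinuous_def by blast
  moreover have "\<forall>\<^sub>F z in at x. dist (g z) (g x) < s + g x - r"
    using cont r(2) by (intro tendstoD) (auto simp: continuous_on_def)
  ultimately show "\<forall>\<^sub>F z in at x. t < u z + ereal (g z)"
  proof eventually_elim
    case (elim z)
    then have "ereal r < ereal s + ereal (g z)"
      by (simp add: dist_real_def abs_less_iff)
    also have "\<dots> \<le> u z + ereal (g z)"
      using elim(1) by (intro add_right_mono) simp
    finally show ?case
      using r(1) by simp
  qed
qed

lemma closed_ekeland_set_lower_semicontinuous: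
  fixes u :: "'a::metric_space \<Rightarrow> ereal"
  assumes lsc: "lower_semicontinuous u" and "\<And>x. u x \<noteq> -\<infinity>" and "u x \<noteq> \<infinity>"
  shows "closed (ekeland_set (\<lambda>x. real_of_ereal (u x)) {x. u x \<noteq> \<infinity>} l x)"
proof -
  have "y \<in> ekeland_set (\<lambda>x. real_of_ereal (u x)) {x. u x \<noteq> \<infinity>} l x \<longleftrightarrow>
      u y + ereal (l * dist x y) \<le> u x" for y
    using assms(2)[of x] assms(2)[of y] \<open>u x \<noteq> \<infinity>\<close>
    by (cases "u x"; cases "u y") (auto simp: ekeland_set_def)
  then have "ekeland_set (\<lambda>x. real_of_ereal (u x)) {x. u x \<noteq> \<infinity>} l x =
      {y. u y + ereal (l * dist x y) \<le> u x}"
    by blast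
  moreover have "closed {y. u y + ereal (l * dist x y) \<le> u x}"
    by (intro closed_sublevel_lower_semicontinuous lower_semicontinuous_add_continuous lsc
        continuous_intros)
  ultimately show ?thesis
    by simp
qed

lemma ekeland_variational_principle:
  fixes u :: "'a::complete_space \<Rightarrow> ereal"
  assumes lsc: "lower_semicontinuous u" and bdd: "\<And>x. ereal m \<le> u x"
    and "u x0 \<noteq> \<infinity>" and "0 < l"
  obtains v where "u v + ereal (l * dist x0 v) \<le> u x0"
    "\<And>w. w \<noteq> v \<Longrightarrow> u v < u w + ereal (l * dist v w)"
proof -
  define D where "D = {x. u x \<noteq> \<infinity>}"
  define f where "f = (\<lambda>x. real_of_ereal (u x))"
  have not_minf: "u x \<noteq> -\<infinity>" for x
    using bdd[of x] by auto
  have u_f: "u x = ereal (f x)" if "x \<in> D" for x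
    using not_minf[of x] that by (cases "u x") (auto simp: D_def f_def)
  have closed_S: "closed (ekeland_set f D l x)" if "x \<in> D" for x
    using closed_ekeland_set_lower_semicontinuous[OF lsc not_minf] that
    by (simp add: D_def f_def)
  have "m \<le> f x" if "x \<in> D" for x
    using bdd[of x] u_f[OF that] by simp
  then have "bdd_below (f ` D)"
    by (rule bdd_belowI2)
  moreover have "x0 \<in> D"
    using \<open>u x0 \<noteq> \<infinity>\<close> by (simp add: D_def)
  ultimately obtain v where "v \<in> D" "f v + l * dist x0 v \<le> f x0"
    and min: "\<And>w. w \<in> D \<Longrightarrow> w \<noteq> v \<Longrightarrow> f v < f w + l * dist v w"
    using ekeland_variational_principle_real[OF closed_S _ _ \<open>0 < l\<close>] by blast
  have "u v < u w + ereal (l * dist v w)" if "w \<noteq> v" for w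
  proof (cases "w \<in> D")
    case True
    then show ?thesis
      using min[OF True that] u_f[OF True] u_f[OF \<open>v \<in> D\<close>] by simp
  next
    case False
    then show ?thesis
      using u_f[OF \<open>v \<in> D\<close>] by (simp add: D_def)
  qed
  moreover have "u v + ereal (l * dist x0 v) \<le> u x0"
    using \<open>f v + l * dist x0 v \<le> f x0\<close> u_f[OF \<open>v \<in> D\<close>] u_f[OF \<open>x0 \<in> D\<close>] by simp
  ultimately show thesis
    using that by blast
qed

lemma global_slope_nonneg: "0 \<le> global_slope u x"
  unfolding global_slope_def by (auto intro: Sup_upper)

lemma global_slope_le:
  fixes u :: "'a::metric_space \<Rightarrow> ereal"
  assumes "\<bar>u v\<bar> \<noteq> \<infinity>" "0 \<le> l"
    and lipschitz_below: "\<And>w. w \<noteq> v \<Longrightarrow> u v \<le> u w + ereal (l * dist v w)"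
  shows "global_slope u v \<le> ereal l"
proof -
  obtain a where a: "u v = ereal a"
    using assms(1) by auto
  have "max 0 (u v - u y) / ereal (dist v y) \<le> ereal l" if "y \<noteq> v" for y
  proof (cases "u y")
    case (real b)
    have "0 < dist v y"
      using that by simp
    moreover have "a \<le> b + l * dist v y"
      using lipschitz_below[OF that] a real by simp
    ultimately have "max 0 (a - b) / dist v y \<le> l"
      using \<open>0 \<le> l\<close> by (simp add: field_simps)
    moreover have "max 0 (u v - u y) / ereal (dist v y) = ereal (max 0 (a - b) / dist v y)"
      using a real \<open>0 < dist v y\<close> by (simp add: max_def zero_ereal_def)
    ultimately show ?thesis
      by simp
  next
    case PInf
    then show ?thesis
      using a \<open>0 \<le> l\<close> by simp
  next
    case MInf
    then show ?thesis
      using lipschitz_below[OF that] a by simp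
  qed
  then show ?thesis
    using a \<open>0 \<le> l\<close> unfolding global_slope_def by (auto intro!: Sup_least)
qed

lemma suminf_less_infinity_telescoping:
  fixes a b :: "nat \<Rightarrow> ereal"
  assumes "\<And>n. 0 \<le> a n" and step: "\<And>n. a n + b (Suc n) \<le> b n"
    and "\<And>n. ereal m \<le> b n" and "b 0 \<noteq> \<infinity>"
  shows "suminf a < \<infinity>"
proof -
  have partial: "(\<Sum>k<N. a k) + b N \<le> b 0" for N
  proof (induction N)
    case (Suc N)
    have "(\<Sum>k<Suc N. a k) + b (Suc N) = (\<Sum>k<N. a k) + (a N + b (Suc N))"
      by (simp add: add.assoc)
    also have "\<dots> \<le> (\<Sum>k<N. a k) + b N"
      using step by (rule add_left_mono)
    finally show ?case
      using Suc.IH by simp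
  qed simp
  have "(\<Sum>k<N. a k) + ereal m \<le> b 0" for N
    using add_left_mono[OF assms(3)] partial order_trans by blast
  then have "suminf a + ereal m \<le> b 0"
    by (intro suminf_bound_add) (auto simp: assms(1))
  then show ?thesis
    using assms(4) by auto
qed

lemma global_slope_mult_dist_le:
  fixes u :: "'a::metric_space \<Rightarrow> ereal"
  assumes "\<bar>u x\<bar> \<noteq> \<infinity>" "\<bar>u y\<bar> \<noteq> \<infinity>"
    and slope: "global_slope u x \<le> ereal (2 * l)"
    and descent: "u y + ereal (l * dist x y) \<le> u x"
  shows "global_slope u x * ereal (dist x y) + 2 * u y \<le> 2 * u x"
proof -
  have "global_slope u x * ereal (dist x y) \<le> ereal (2 * l * dist x y)"
    using ereal_mult_right_mono[OF slope, of "ereal (dist x y)"] by simp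
  moreover have "ereal (2 * l * dist x y) + 2 * u y \<le> 2 * u x"
    using assms(1,2) descent by (cases "u x"; cases "u y") auto
  ultimately show ?thesis
    by (rule order_trans[OF add_right_mono])
qed

lemma ekeland_descent_sequence:
  fixes u :: "'a::complete_space \<Rightarrow> ereal"
  assumes lsc: "lower_semicontinuous u" and bdd: "\<And>x. ereal m \<le> u x" and "u x0 \<noteq> \<infinity>"
  obtains z where "\<And>n. \<bar>u (z n)\<bar> \<noteq> \<infinity>"
    "\<And>n. global_slope u (z n) \<le> ereal ((1/2) ^ n)"
    "\<And>n. u (z (Suc n)) + ereal ((1/2) ^ Suc n * dist (z n) (z (Suc n))) \<le> u (z n)"
proof -
  have ekeland: "\<exists>v. u v \<noteq> \<infinity> \<and> u v + ereal (l * dist x v) \<le> u x \<and>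
      (\<forall>w. w \<noteq> v \<longrightarrow> u v \<le> u w + ereal (l * dist v w))"
    if fin: "u x \<noteq> \<infinity>" and "0 < l" for x l
  proof -
    obtain v where v: "u v + ereal (l * dist x v) \<le> u x"
      "\<And>w. w \<noteq> v \<Longrightarrow> u v < u w + ereal (l * dist v w)"
      using ekeland_variational_principle[OF lsc bdd fin \<open>0 < l\<close>] by blast
    moreover have "u v \<noteq> \<infinity>"
      using v(1) \<open>u x \<noteq> \<infinity>\<close> by auto
    ultimately show ?thesis
      using less_imp_le by blast
  qed
  let ?P = "\<lambda>n x. u x \<noteq> \<infinity> \<and>
    (\<forall>w. w \<noteq> x \<longrightarrow> u x \<le> u w + ereal ((1/2) ^ n * dist x w))"
  let ?Q = "\<lambda>n x y. u y + ereal ((1/2) ^ Suc n * dist x y) \<le> u x"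
  have start: "\<exists>x. ?P 0 x"
    using ekeland[OF \<open>u x0 \<noteq> \<infinity>\<close>, of 1] by auto
  have step: "\<exists>y. ?P (Suc n) y \<and> ?Q n x y" if "?P n x" for n x
    using ekeland[of x "(1/2) ^ Suc n"] that by auto
  from dependent_nat_choice[of ?P ?Q, OF start step]
  obtain z where z: "\<And>n. ?P n (z n) \<and> ?Q n (z n) (z (Suc n))"
    by blast
  moreover have finite: "\<bar>u (z n)\<bar> \<noteq> \<infinity>" for n
    using z[of n] bdd[of "z n"] by auto
  moreover have "global_slope u (z n) \<le> ereal ((1/2) ^ n)" for n
    using z[of n] by (intro global_slope_le finite) auto
  ultimately show thesis
    using that by blast
qed

theorem proposition2p4:
  fixes u :: "'a::complete_space \<Rightarrow> ereal"
  assumes not_minf: "\<And>x. u x \<noteq> -\<infinity>"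
    and proper: "\<exists>x. u x \<noteq> \<infinity>"
    and lsc: "lower_semicontinuous u"
    and bdd_below: "\<exists>m::real. \<forall>x. ereal m \<le> u x"
  shows "\<exists>z :: nat \<Rightarrow> 'a.
           (\<lambda>n. global_slope u (z n)) \<longlonglongrightarrow> 0 \<and>
           (\<Sum>n. global_slope u (z n) * ereal (dist (z n) (z (Suc n)))) < \<infinity>"
proof -
  obtain x0 m where "u x0 \<noteq> \<infinity>" and bdd: "\<And>x. ereal m \<le> u x"
    using proper bdd_below by blast
  then obtain z where finite: "\<And>n. \<bar>u (z n)\<bar> \<noteq> \<infinity>"
    and slope: "\<And>n. global_slope u (z n) \<le> ereal ((1/2) ^ n)"
    and descent: "\<And>n. u (z (Suc n)) + ereal ((1/2) ^ Suc n * dist (z n) (z (Suc n))) \<le> u (z n)"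
    using ekeland_descent_sequence[OF lsc] by blast
  have geometric: "(\<lambda>n. ereal ((1/2) ^ n)) \<longlonglongrightarrow> 0"
    using tendsto_ereal[OF LIMSEQ_realpow_zero[of "1/2::real"]] by (simp add: zero_ereal_def)
  have step: "global_slope u (z n) * ereal (dist (z n) (z (Suc n))) + 2 * u (z (Suc n))
      \<le> 2 * u (z n)" for n
    using slope[of n] by (intro global_slope_mult_dist_le[OF finite finite _ descent]) simp
  have "(\<lambda>n. global_slope u (z n)) \<longlonglongrightarrow> 0"
    by (rule tendsto_sandwich[OF _ _ tendsto_const geometric])
      (simp_all add: global_slope_nonneg slope)
  moreover have "(\<Sum>n. global_slope u (z n) * ereal (dist (z n) (z (Suc n)))) < \<infinity>"
  proof (rule suminf_less_infinity_telescoping[where b="\<lambda>n. 2 * u (z n)" and m="2 * m",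
        OF _ step])
    show "ereal (2 * m) \<le> 2 * u (z n)" for n
      using bdd[of "z n"] finite[of n] by (cases "u (z n)") auto
  qed (use finite[of 0] in \<open>auto simp: global_slope_nonneg\<close>)
  ultimately show ?thesis
    by blast
qed

end
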